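(* Let $(\mathfrak{g},[\cdot,\cdot]_{\mathfrak{g}})$ be a Leibniz algebra over a field $\mathbf{K}$, $(V;\rho^L,\rho^R)$ a representation, and $T:V\to\mathfrak{g}$ a relative Rota-Baxter operator. If $\mathcal{Z}^1(V,\mathfrak{g})=\partial_T(\mathrm{Nij}(T))$, then $T$ is rigid.
   Context: A Leibniz algebra is a vector space $\mathfrak{g}$ with bilinear $[\cdot,\cdot]_{\mathfrak{g}}$ satisfying $[x,[y,z]_{\mathfrak{g}}]_{\mathfrak{g}}=[[x,y]_{\mathfrak{g}},z]_{\mathfrak{g}}+[y,[x,z]_{\mathfrak{g}}]_{\mathfrak{g}}$. A representation $(V;\rho^L,\rho^R)$: linear $\rho^L,\rho^R:\mathfrak{g}\to\mathfrak{gl}(V)$ with $\rho^L([x,y]_{\mathfrak{g}})=[\rho^L(x),\rho^L(y)]$, $\rho^R([x,y]_{\mathfrak{g}})=[\rho^L(x),\rho^R(y)]$, $\rho^R(y)\rho^L(x)=-\rho^R(y)\rho^R(x)$. $L_xy=[x,y]_{\mathfrak{g}}$. A relative Rota-Baxter operator is a linear $T:V\to\mathfrak{g}$ with $[Tv_1,Tv_2]_{\mathfrak{g}}=T(\rho^L(Tv_1)v_2+\rho^R(Tv_2)v_1)$. $C^1(V,\mathfrak{g})=\mathrm{Hom}(V,\mathfrak{g})$; $\partial_T:\mathfrak{g}\to C^1$ is $(\partial_Tx)(v)=T\rho^L(x)v-[x,Tv]_{\mathfrak{g}}$, and $\partial_T:C^1\to\mathrm{Hom}(V\otimes V,\mathfrak{g})$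 is $(\partial_Tf)(u,v)=[Tu,f(v)]_{\mathfrak{g}}+[f(u),Tv]_{\mathfrak{g}}-T(\rho^L(f(u))v+\rho^R(f(v))u)-f(\rho^L(Tu)v+\rho^R(Tv)u)$; $\mathcal{Z}^1(V,\mathfrak{g})$ is the kernel of the latter. An element $x\in\mathfrak{g}$ is a Nijenhuis element associated to $T$ if for all $y,z\in\mathfrak{g}$, $u\in V$: $[[x,y]_{\mathfrak{g}},[x,z]_{\mathfrak{g}}]_{\mathfrak{g}}=0$, $\rho^L([x,y]_{\mathfrak{g}})\rho^L(x)=0$, $\rho^R([x,y]_{\mathfrak{g}})\rho^L(x)=0$, $[x,T\rho^L(x)u-[x,Tu]_{\mathfrak{g}}]_{\mathfrak{g}}=0$; $\mathrm{Nij}(T)$ is the set of these. Formal deformations: the bracket and $\rho^L,\rho^R$ extend $\mathbf{K}[[t]]$-bilinearly to $\mathfrak{g}[[t]]$, $V[[t]]$. A formal deformation of $T$ is $T_t=\sum_{i\ge0}\mathfrak{T}_it^i$, $\mathfrak{T}_i\in\mathrm{Hom}(V,\mathfrak{g})$, $\mathfrak{T}_0=T$, extended $\mathbf{K}[[t]]$-linearly, with $[T_t(u),T_t(v)]_{\mathfrak{g}}=T_t(\rho^L(T_t(u))v+\rho^R(T_t(v))u)$ for $u,v\in V$. Two formal deformations $\bar T_t,T_t$ of $T$ are equivalent if there exist $x\in\mathfrak{g}$, $\phi_i\in\mathfrak{gl}(\mathfrak{g})$, $\varphi_i\in\mathfrak{gl}(V)$ ($i\ge2$) such that $\phi_t=\mathrm{Id}_{\mathfrak{g}}+tL_x+\sum_{i\ge2}\phi_it^i$,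 $\varphi_t=\mathrm{Id}_V+t\rho^L(x)+\sum_{i\ge2}\varphi_it^i$ satisfy $[\phi_t(y),\phi_t(z)]_{\mathfrak{g}}=\phi_t[y,z]_{\mathfrak{g}}$, $\varphi_t\rho^L(y)u=\rho^L(\phi_t(y))\varphi_t(u)$, $\varphi_t\rho^R(y)u=\rho^R(\phi_t(y))\varphi_t(u)$, and $T_t\circ\varphi_t=\phi_t\circ\bar T_t$. A formal deformation $T_t$ is trivial if it is equivalent to $T$ (the constant deformation, taken as $\bar T_t=T$). $T$ is rigid if every formal deformation of $T$ is trivial. *)

theory Defs
  imports Main "HOL.Vector_Spaces"
begin

definition leibniz_algebra ::
  "('k::field \<Rightarrow> 'g::ab_group_add \<Rightarrow> 'g) \<Rightarrow> ('g \<Rightarrow> 'g \<Rightarrow> 'g) \<Rightarrow> bool" where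
  "leibniz_algebra sg br \<longleftrightarrow> vector_space sg
     \<and> (\<forall>x. Vector_Spaces.linear sg sg (br x))
     \<and> (\<forall>y. Vector_Spaces.linear sg sg (\<lambda>x. br x y))
     \<and> (\<forall>x y z. br x (br y z) = br (br x y) z + br y (br x z))"

definition leibniz_rep ::
  "('k::field \<Rightarrow> 'g::ab_group_add \<Rightarrow> 'g) \<Rightarrow> ('g \<Rightarrow> 'g \<Rightarrow> 'g) \<Rightarrow>
   ('k \<Rightarrow> 'v::ab_group_add \<Rightarrow> 'v) \<Rightarrow> ('g \<Rightarrow> 'v \<Rightarrow> 'v) \<Rightarrow> ('g \<Rightarrow> 'v \<Rightarrow> 'v) \<Rightarrow> bool" where
  "leibniz_rep sg br sv rL rR \<longleftrightarrow> vector_space sv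
     \<and> (\<forall>x. Vector_Spaces.linear sv sv (rL x)) \<and> (\<forall>x. Vector_Spaces.linear sv sv (rR x))
     \<and> (\<forall>v. Vector_Spaces.linear sg sv (\<lambda>x. rL x v))
     \<and> (\<forall>v. Vector_Spaces.linear sg sv (\<lambda>x. rR x v))
     \<and> (\<forall>x y v. rL (br x y) v = rL x (rL y v) - rL y (rL x v))
     \<and> (\<forall>x y v. rR (br x y) v = rL x (rR y v) - rR y (rL x v))
     \<and> (\<forall>x y v. rR y (rL x v) = - rR y (rR x v))"

definition rel_RB ::
  "('k::field \<Rightarrow> 'g::ab_group_add \<Rightarrow> 'g) \<Rightarrow> ('g \<Rightarrow> 'g \<Rightarrow> 'g) \<Rightarrow>
   ('k \<Rightarrow> 'v::ab_group_add \<Rightarrow> 'v) \<Rightarrow> ('g \<Rightarrow> 'v \<Rightarrow> 'v) \<Rightarrow> ('g \<Rightarrow> 'v \<Rightarrow> 'v) \<Rightarrow>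
   ('v \<Rightarrow> 'g) \<Rightarrow> bool" where
  "rel_RB sg br sv rL rR T \<longleftrightarrow> Vector_Spaces.linear sv sg T
     \<and> (\<forall>v1 v2. br (T v1) (T v2) = T (rL (T v1) v2 + rR (T v2) v1))"

definition dT0 :: "('g \<Rightarrow> 'g \<Rightarrow> 'g::ab_group_add) \<Rightarrow> ('g \<Rightarrow> 'v \<Rightarrow> 'v) \<Rightarrow> ('v \<Rightarrow> 'g) \<Rightarrow> 'g \<Rightarrow> ('v \<Rightarrow> 'g)" where
  "dT0 br rL T x = (\<lambda>v. T (rL x v) - br x (T v))"

definition dT1 ::
  "('g \<Rightarrow> 'g \<Rightarrow> 'g::ab_group_add) \<Rightarrow> ('g \<Rightarrow> 'v::ab_group_add \<Rightarrow> 'v) \<Rightarrow> ('g \<Rightarrow> 'v \<Rightarrow> 'v) \<Rightarrow>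
   ('v \<Rightarrow> 'g) \<Rightarrow> ('v \<Rightarrow> 'g) \<Rightarrow> 'v \<Rightarrow> 'v \<Rightarrow> 'g" where
  "dT1 br rL rR T f u v = br (T u) (f v) + br (f u) (T v)
     - T (rL (f u) v + rR (f v) u) - f (rL (T u) v + rR (T v) u)"

definition Z1 ::
  "('k::field \<Rightarrow> 'g::ab_group_add \<Rightarrow> 'g) \<Rightarrow> ('g \<Rightarrow> 'g \<Rightarrow> 'g) \<Rightarrow>
   ('k \<Rightarrow> 'v::ab_group_add \<Rightarrow> 'v) \<Rightarrow> ('g \<Rightarrow> 'v \<Rightarrow> 'v) \<Rightarrow> ('g \<Rightarrow> 'v \<Rightarrow> 'v) \<Rightarrow>
   ('v \<Rightarrow> 'g) \<Rightarrow> ('v \<Rightarrow> 'g) set" where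
  "Z1 sg br sv rL rR T = {f. Vector_Spaces.linear sv sg f \<and> (\<forall>u v. dT1 br rL rR T f u v = 0)}"

definition Nij ::
  "('g \<Rightarrow> 'g \<Rightarrow> 'g::ab_group_add) \<Rightarrow> ('g \<Rightarrow> 'v::ab_group_add \<Rightarrow> 'v) \<Rightarrow> ('g \<Rightarrow> 'v \<Rightarrow> 'v) \<Rightarrow>
   ('v \<Rightarrow> 'g) \<Rightarrow> 'g set" where
  "Nij br rL rR T = {x. \<forall>y z u.
       br (br x y) (br x z) = 0
     \<and> rL (br x y) (rL x u) = 0
     \<and> rR (br x y) (rL x u) = 0
     \<and> br x (T (rL x u) - br x (T u)) = 0}"

text \<open>A formal deformation T_t = sum_i Ts i t^i, with the deformation equation compared
  coefficientwise (coefficient of t^n).\<close>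
definition formal_deformation ::
  "('k::field \<Rightarrow> 'g::ab_group_add \<Rightarrow> 'g) \<Rightarrow> ('g \<Rightarrow> 'g \<Rightarrow> 'g) \<Rightarrow>
   ('k \<Rightarrow> 'v::ab_group_add \<Rightarrow> 'v) \<Rightarrow> ('g \<Rightarrow> 'v \<Rightarrow> 'v) \<Rightarrow> ('g \<Rightarrow> 'v \<Rightarrow> 'v) \<Rightarrow>
   ('v \<Rightarrow> 'g) \<Rightarrow> (nat \<Rightarrow> 'v \<Rightarrow> 'g) \<Rightarrow> bool" where
  "formal_deformation sg br sv rL rR T Ts \<longleftrightarrow>
     (\<forall>i. Vector_Spaces.linear sv sg (Ts i)) \<and> Ts 0 = T
     \<and> (\<forall>n u v. (\<Sum>i\<le>n. br (Ts i u) (Ts (n - i) v))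
                = (\<Sum>i\<le>n. Ts i (rL (Ts (n - i) u) v + rR (Ts (n - i) v) u)))"

text \<open>T_t is trivial: equivalent to the constant deformation T, via
  phi_t = sum_i ph i t^i (on g) and varphi_t = sum_i vph i t^i (on V).\<close>
definition trivial_deformation ::
  "('k::field \<Rightarrow> 'g::ab_group_add \<Rightarrow> 'g) \<Rightarrow> ('g \<Rightarrow> 'g \<Rightarrow> 'g) \<Rightarrow>
   ('k \<Rightarrow> 'v::ab_group_add \<Rightarrow> 'v) \<Rightarrow> ('g \<Rightarrow> 'v \<Rightarrow> 'v) \<Rightarrow> ('g \<Rightarrow> 'v \<Rightarrow> 'v) \<Rightarrow>
   ('v \<Rightarrow> 'g) \<Rightarrow> (nat \<Rightarrow> 'v \<Rightarrow> 'g) \<Rightarrow> bool" where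
  "trivial_deformation sg br sv rL rR T Ts \<longleftrightarrow>
    (\<exists>x ph vph.
       (\<forall>i. Vector_Spaces.linear sg sg (ph i)) \<and> (\<forall>i. Vector_Spaces.linear sv sv (vph i))
     \<and> ph 0 = id \<and> ph 1 = br x \<and> vph 0 = id \<and> vph 1 = rL x
     \<and> (\<forall>n y z. (\<Sum>i\<le>n. br (ph i y) (ph (n - i) z)) = ph n (br y z))
     \<and> (\<forall>n y u. vph n (rL y u) = (\<Sum>i\<le>n. rL (ph i y) (vph (n - i) u)))
     \<and> (\<forall>n y u. vph n (rR y u) = (\<Sum>i\<le>n. rR (ph i y) (vph (n - i) u)))
     \<and> (\<forall>n u. (\<Sum>i\<le>n. Ts i (vph (n - i) u)) = ph n (T u)))"

definition rigid ::
  "('k::field \<Rightarrow> 'g::ab_group_add \<Rightarrow> 'g) \<Rightarrow> ('g \<Rightarrow> 'g \<Rightarrow> 'g) \<Rightarrow>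
   ('k \<Rightarrow> 'v::ab_group_add \<Rightarrow> 'v) \<Rightarrow> ('g \<Rightarrow> 'v \<Rightarrow> 'v) \<Rightarrow> ('g \<Rightarrow> 'v \<Rightarrow> 'v) \<Rightarrow>
   ('v \<Rightarrow> 'g) \<Rightarrow> bool" where
  "rigid sg br sv rL rR T \<longleftrightarrow>
     (\<forall>Ts. formal_deformation sg br sv rL rR T Ts \<longrightarrow> trivial_deformation sg br sv rL rR T Ts)"

end

theory Submission
  imports Defs
begin

(* Write a formal deformation as T_t = T + t^k S_k + O(t^(k+1)). The coefficient of t^k in the
   deformation equation says that -S_k is a 1-cocycle, so by hypothesis -S_k = dT0 y for a Nijenhuis
   element y. The Nijenhuis conditions make phi = Id + t^k L_y an automorphism of g[[t]] and
   psi = Id + t^k rL y compatible with it, so the series S' with phi S' = T_t psi is a deformation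
   equivalent to T_t whose coefficients of degrees 1..k vanish. Repeating this for k = 1, 2, ... and
   composing the gauge transformations, each of which changes only coefficients of degree at
   least k, gives series phi_t, psi_t with T_t psi_t = phi_t T. *)

lemma additive_linear: "Vector_Spaces.linear s1 s2 f \<Longrightarrow> additive f"
  by (simp add: additive_def linear_iff)

lemma linear_add_fun:
  "Vector_Spaces.linear s1 s2 f \<Longrightarrow> Vector_Spaces.linear s1 s2 g \<Longrightarrow>
    Vector_Spaces.linear s1 s2 (\<lambda>x. f x + g x)"
  unfolding linear_iff by (auto simp: vector_space.vector_space_assms(1)[of s2])

lemma linear_diff_fun:
  "Vector_Spaces.linear s1 s2 f \<Longrightarrow> Vector_Spaces.linear s1 s2 g \<Longrightarrow>
    Vector_Spaces.linear s1 s2 (\<lambda>x. f x - g x)"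
  unfolding linear_iff by (auto simp: module.scale_right_diff_distrib[of s2] module_iff_vector_space)

lemma linear_minus_fun:
  "Vector_Spaces.linear s1 s2 f \<Longrightarrow> Vector_Spaces.linear s1 s2 (\<lambda>x. - f x)"
  unfolding linear_iff by (auto simp: module.scale_minus_right[of s2] module_iff_vector_space)

lemma linear_comp_fun:
  "Vector_Spaces.linear s1 s2 f \<Longrightarrow> Vector_Spaces.linear s2 s3 g \<Longrightarrow>
    Vector_Spaces.linear s1 s3 (\<lambda>x. g (f x))"
  using Vector_Spaces.linear_compose[of s1 s2 f s3 g] by (simp add: o_def)

definition biadditive :: "('a::ab_group_add \<Rightarrow> 'b::ab_group_add \<Rightarrow> 'c::ab_group_add) \<Rightarrow> bool" where
  "biadditive f \<longleftrightarrow> (\<forall>b. additive (\<lambda>a. f a b)) \<and> (\<forall>a. additive (f a))"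

lemma biadditive_simps:
  assumes "biadditive f"
  shows "f (a + a') b = f a b + f a' b" "f a (b + b') = f a b + f a b'"
    "f 0 b = 0" "f a 0 = 0" "f (a - a') b = f a b - f a' b" "f a (b - b') = f a b - f a b'"
    "f (- a) b = - f a b" "f a (- b) = - f a b"
proof -
  have l: "additive (\<lambda>a. f a b)" for b
    using assms unfolding biadditive_def by blast
  have r: "additive (f a)" for a
    using assms unfolding biadditive_def by blast
  show "f (a + a') b = f a b + f a' b" "f 0 b = 0" "f (a - a') b = f a b - f a' b" "f (- a) b = - f a b"
    using additive.add[OF l] additive.zero[OF l] additive.diff[OF l] additive.minus[OF l] by blast+
  show "f a (b + b') = f a b + f a b'" "f a 0 = 0" "f a (b - b') = f a b - f a b'" "f a (- b) = - f a b"
    using additive.add[OF r] additive.zero[OF r] additive.diff[OF r] additive.minus[OF r] by blast+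
qed

section \<open>Cauchy products of coefficient sequences\<close>

(* A sequence a :: nat => 'a stands for the formal power series sum a_n t^n. For bilinear f,
   cauchy f a b is the coefficient sequence of f(a, b), and shift k a is that of t^k a. *)
definition cauchy ::
  "('a \<Rightarrow> 'b \<Rightarrow> 'c::comm_monoid_add) \<Rightarrow> (nat \<Rightarrow> 'a) \<Rightarrow> (nat \<Rightarrow> 'b) \<Rightarrow> nat \<Rightarrow> 'c" where
  "cauchy f a b n = (\<Sum>i\<le>n. f (a i) (b (n - i)))"

definition shift :: "nat \<Rightarrow> (nat \<Rightarrow> 'a::zero) \<Rightarrow> nat \<Rightarrow> 'a" where
  "shift k a n = (if k \<le> n then a (n - k) else 0)"

abbreviation series_apply :: "(nat \<Rightarrow> 'a \<Rightarrow> 'b) \<Rightarrow> (nat \<Rightarrow> 'a) \<Rightarrow> nat \<Rightarrow> 'b::comm_monoid_add" where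
  "series_apply A a \<equiv> cauchy (\<lambda>f. f) A a"

lemma cauchy_add_left:
  assumes "\<And>i j. f (c i) (b j) = f (a i) (b j) + f (a' i) (b j)"
  shows "cauchy f c b n = cauchy f a b n + cauchy f a' b n"
  unfolding cauchy_def by (simp add: assms sum.distrib)

lemma cauchy_add_right:
  assumes "\<And>i j. f (a i) (c j) = f (a i) (b j) + f (a i) (b' j)"
  shows "cauchy f a c n = cauchy f a b n + cauchy f a b' n"
  unfolding cauchy_def by (simp add: assms sum.distrib)

lemma cauchy_shift_right:
  assumes "\<And>i. f (a i) 0 = 0"
  shows "cauchy f a (shift k b) n = shift k (cauchy f a b) n"
proof (cases "k \<le> n")
  case True
  have "cauchy f a (shift k b) n = (\<Sum>i\<le>n - k. f (a i) (shift k b (n - i)))"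
    unfolding cauchy_def by (rule sum.mono_neutral_cong_right) (auto simp: shift_def assms)
  also have "\<dots> = cauchy f a b (n - k)"
    unfolding cauchy_def using True by (intro sum.cong) (auto simp: shift_def diff_diff_add add.commute)
  finally show ?thesis using True by (simp add: shift_def)
next
  case False
  then have "cauchy f a (shift k b) n = 0"
    unfolding cauchy_def shift_def using assms by (intro sum.neutral) auto
  with False show ?thesis by (simp add: shift_def)
qed

lemma cauchy_shift_left:
  assumes "\<And>j. f z (b j) = 0"
  shows "cauchy f (\<lambda>i. if k \<le> i then a (i - k) else z) b n = shift k (cauchy f a b) n"
proof (cases "k \<le> n")
  case True
  have "cauchy f (\<lambda>i. if k \<le> i then a (i - k) else z) b n = (\<Sum>i\<in>{k..n}. f (a (i - k)) (b (n - i)))"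
    unfolding cauchy_def by (rule sum.mono_neutral_cong_right) (auto simp: assms)
  also have "\<dots> = (\<Sum>i\<in>{0..n - k}. f (a i) (b (n - k - i)))"
    using True sum.shift_bounds_cl_nat_ivl[of "\<lambda>i. f (a (i - k)) (b (n - i))" 0 k "n - k"]
    by (simp add: algebra_simps)
  finally show ?thesis using True by (simp add: shift_def cauchy_def atLeast0AtMost)
next
  case False
  then have "cauchy f (\<lambda>i. if k \<le> i then a (i - k) else z) b n = 0"
    unfolding cauchy_def using assms by (intro sum.neutral) auto
  with False show ?thesis by (simp add: shift_def)
qed

lemma cauchy_expand:
  assumes "biadditive f"
  shows "cauchy f (\<lambda>i. a i + shift k a' i) (\<lambda>i. b i + shift k b' i) n =
    cauchy f a b n + shift k (\<lambda>m. cauchy f a' b m + cauchy f a b' m + shift k (cauchy f a' b') m) n"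
proof -
  note f = biadditive_simps[OF assms]
  have shift_left: "cauchy f (shift k c) d m = shift k (cauchy f c d) m" for c d m
    using cauchy_shift_left[of f 0 d k c m] by (simp add: f shift_def[abs_def])
  have right: "cauchy f c (\<lambda>i. b i + shift k b' i) = (\<lambda>m. cauchy f c b m + shift k (cauchy f c b') m)" for c
    by (rule ext, subst cauchy_add_right[where b=b and b'="shift k b'"]) (simp_all add: f cauchy_shift_right)
  have "cauchy f (\<lambda>i. a i + shift k a' i) (\<lambda>i. b i + shift k b' i) n
      = cauchy f a (\<lambda>i. b i + shift k b' i) n + cauchy f (shift k a') (\<lambda>i. b i + shift k b' i) n"
    by (rule cauchy_add_left) (simp add: f)
  also have "\<dots> = cauchy f a b n + shift k (cauchy f a b') n
      + shift k (\<lambda>m. cauchy f a' b m + shift k (cauchy f a' b') m) n"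
    unfolding right by (simp add: shift_left shift_def)
  finally show ?thesis by (simp add: shift_def)
qed

lemma cauchy_single_left:
  assumes "\<And>i. 0 < i \<Longrightarrow> i \<le> n \<Longrightarrow> f (a i) (b (n - i)) = 0"
  shows "cauchy f a b n = f (a 0) (b n)"
proof -
  have "(\<Sum>i\<in>{0}. f (a i) (b (n - i))) = cauchy f a b n"
    unfolding cauchy_def using assms by (intro sum.mono_neutral_left) auto
  then show ?thesis by simp
qed

lemma cauchy_single_right:
  assumes "\<And>i. i < n \<Longrightarrow> f (a i) (b (n - i)) = 0"
  shows "cauchy f a b n = f (a n) (b 0)"
proof -
  have "(\<Sum>i\<in>{n}. f (a i) (b (n - i))) = cauchy f a b n"
    unfolding cauchy_def using assms by (intro sum.mono_neutral_left) auto
  then show ?thesis by simp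
qed

lemma cauchy_two_terms:
  assumes "0 < k" and "\<And>i. 0 < i \<Longrightarrow> i < k \<Longrightarrow> f (a i) (b (k - i)) = 0"
  shows "cauchy f a b k = f (a 0) (b k) + f (a k) (b 0)"
proof -
  have "(\<Sum>i\<in>{0, k}. f (a i) (b (k - i))) = cauchy f a b k"
    unfolding cauchy_def using assms by (intro sum.mono_neutral_left) auto
  then show ?thesis using assms(1) by simp
qed

lemma series_apply_add:
  assumes "\<And>i. additive (A i)"
  shows "series_apply A (\<lambda>i. a i + b i) = (\<lambda>n. series_apply A a n + series_apply A b n)"
  using additive.add[OF assms] by (simp add: fun_eq_iff cauchy_add_right[where b=a and b'=b])

lemma series_apply_add_shift:
  assumes "\<And>i. additive (A i)"
  shows "series_apply A (\<lambda>i. a i + shift k b i) = (\<lambda>n. series_apply A a n + shift k (series_apply A b) n)"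
  using additive.add[OF assms] additive.zero[OF assms]
  by (simp add: fun_eq_iff cauchy_add_right[where b=a and b'="shift k b"] cauchy_shift_right)

lemma series_apply_shift_left:
  "series_apply (\<lambda>i x. shift k (\<lambda>j. A j x) i) w n = shift k (series_apply A w) n"
proof -
  have "(\<lambda>i x. shift k (\<lambda>j. A j x) i) = (\<lambda>i. if k \<le> i then A (i - k) else (\<lambda>x. 0))"
    by (simp add: shift_def fun_eq_iff)
  then show ?thesis
    using cauchy_shift_left[of "\<lambda>f. f" "\<lambda>x. 0" w k A n] by simp
qed

section \<open>Gauge transformations\<close>

(* gauge k D a = (Id + t^k D) a, and comp_gauge k D P = P o (Id + t^k D) for an operator series P. *)
definition gauge :: "nat \<Rightarrow> ('a \<Rightarrow> 'a::ab_group_add) \<Rightarrow> (nat \<Rightarrow> 'a) \<Rightarrow> nat \<Rightarrow> 'a" where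
  "gauge k D a n = a n + shift k (\<lambda>m. D (a m)) n"

definition comp_gauge ::
  "nat \<Rightarrow> ('a \<Rightarrow> 'a) \<Rightarrow> (nat \<Rightarrow> 'a \<Rightarrow> 'b::ab_group_add) \<Rightarrow> nat \<Rightarrow> 'a \<Rightarrow> 'b" where
  "comp_gauge k D P n x = P n x + shift k (\<lambda>j. P j (D x)) n"

lemma inj_gauge:
  assumes "0 < k"
  shows "inj (gauge k D)"
proof
  fix a a' assume eq: "gauge k D a = gauge k D a'"
  have "a n = a' n" for n
  proof (induction n rule: less_induct)
    case (less n)
    have "shift k (\<lambda>m. D (a m)) n = shift k (\<lambda>m. D (a' m)) n"
      using less assms by (simp add: shift_def)
    then show ?case
      using fun_cong[OF eq, of n] by (simp add: gauge_def)
  qed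
  then show "a = a'" ..
qed

lemma comp_gauge_below:
  "n < k \<Longrightarrow> comp_gauge k D P n = P n"
  by (simp add: comp_gauge_def shift_def fun_eq_iff)

lemma linear_comp_gauge:
  assumes "Vector_Spaces.linear s1 s1 D" and "\<And>i. Vector_Spaces.linear s1 s2 (P i)"
  shows "Vector_Spaces.linear s1 s2 (comp_gauge k D P n)"
proof (cases "k \<le> n")
  case True
  then have "comp_gauge k D P n = (\<lambda>x. P n x + P (n - k) (D x))"
    by (simp add: comp_gauge_def shift_def fun_eq_iff)
  then show ?thesis using assms by (simp add: linear_add_fun linear_comp_fun)
next
  case False
  then have "comp_gauge k D P n = P n"
    by (simp add: comp_gauge_def shift_def fun_eq_iff)
  then show ?thesis using assms by simp
qed

lemma series_apply_gauge:
  assumes "\<And>i. additive (A i)"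
  shows "series_apply A (gauge k E w) = series_apply (comp_gauge k E A) w"
proof
  fix n
  have "series_apply (comp_gauge k E A) w n
      = series_apply A w n + series_apply (\<lambda>i x. shift k (\<lambda>j. A j (E x)) i) w n"
    unfolding comp_gauge_def by (rule cauchy_add_left) simp
  also have "\<dots> = series_apply A w n + shift k (series_apply A (\<lambda>m. E (w m))) n"
    using series_apply_shift_left[of k "\<lambda>j x. A j (E x)" w n] by (simp add: cauchy_def[abs_def])
  finally show "series_apply A (gauge k E w) n = series_apply (comp_gauge k E A) w n"
    unfolding gauge_def by (simp add: series_apply_add_shift assms)
qed

lemma series_apply_gauge_left:
  assumes "additive D"
  shows "series_apply (\<lambda>i x. gauge k D (\<lambda>m. A m x) i) w = gauge k D (series_apply A w)"
proof
  fix n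
  have "series_apply (\<lambda>i x. gauge k D (\<lambda>m. A m x) i) w n
      = series_apply A w n + series_apply (\<lambda>i x. shift k (\<lambda>j. D (A j x)) i) w n"
    unfolding gauge_def by (rule cauchy_add_left) simp
  also have "\<dots> = series_apply A w n + shift k (\<lambda>m. D (series_apply A w m)) n"
    using series_apply_shift_left[of k "\<lambda>j x. D (A j x)" w n]
    by (simp add: cauchy_def[abs_def] additive.sum[OF assms])
  finally show "series_apply (\<lambda>i x. gauge k D (\<lambda>m. A m x) i) w n = gauge k D (series_apply A w) n"
    by (simp add: gauge_def)
qed

(* That is, (Id + t D1, Id + t D2, Id + t D3) preserves f exactly, with no term in t^2. *)
definition nilpotent_derivation ::
  "('a \<Rightarrow> 'b \<Rightarrow> 'c::ab_group_add) \<Rightarrow> ('a \<Rightarrow> 'a) \<Rightarrow> ('b \<Rightarrow> 'b) \<Rightarrow> ('c \<Rightarrow> 'c) \<Rightarrow> bool" where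
  "nilpotent_derivation f D1 D2 D3 \<longleftrightarrow>
     (\<forall>a b. f (D1 a) b + f a (D2 b) = D3 (f a b) \<and> f (D1 a) (D2 b) = 0)"

lemma cauchy_gauge:
  assumes f: "biadditive f" and "additive D3" and der: "nilpotent_derivation f D1 D2 D3"
  shows "cauchy f (gauge k D1 a) (gauge k D2 b) = gauge k D3 (cauchy f a b)"
proof
  fix n
  have "cauchy f (\<lambda>m. D1 (a m)) b m + cauchy f a (\<lambda>m. D2 (b m)) m = D3 (cauchy f a b m)" for m
    using der unfolding cauchy_def nilpotent_derivation_def
    by (simp add: sum.distrib[symmetric] additive.sum[OF assms(2)])
  moreover have "cauchy f (\<lambda>m. D1 (a m)) (\<lambda>m. D2 (b m)) = (\<lambda>m. 0)"
    using der unfolding cauchy_def nilpotent_derivation_def by (simp add: fun_eq_iff)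
  ultimately show "cauchy f (gauge k D1 a) (gauge k D2 b) n = gauge k D3 (cauchy f a b) n"
    unfolding gauge_def[abs_def] cauchy_expand[OF f] by (simp add: shift_def)
qed

lemma gauge_const_right:
  assumes f: "biadditive f" and der: "nilpotent_derivation f D1 D2 D3"
  shows "f (gauge k D1 a m) v + shift k (\<lambda>j. f (gauge k D1 a j) (D2 v)) m
    = gauge k D3 (\<lambda>j. f (a j) v) m"
  using der unfolding nilpotent_derivation_def gauge_def shift_def
  by (simp add: biadditive_simps[OF f] algebra_simps)

lemma cauchy_comp_gauge:
  assumes f: "biadditive f" and R: "\<And>n. additive (R n)"
    and PQ: "\<And>n a b. cauchy f (\<lambda>i. P i a) (\<lambda>i. Q i b) n = R n (f a b)"
    and der: "nilpotent_derivation f D1 D2 D3"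
  shows "cauchy f (\<lambda>i. comp_gauge k D1 P i a) (\<lambda>i. comp_gauge k D2 Q i b) n
    = comp_gauge k D3 R n (f a b)"
proof -
  have PQ': "cauchy f (\<lambda>i. P i a) (\<lambda>i. Q i b) = (\<lambda>n. R n (f a b))" for a b
    using PQ by (simp add: fun_eq_iff)
  show ?thesis
    unfolding comp_gauge_def cauchy_expand[OF f] PQ'
    using der additive.add[OF R, symmetric] additive.zero[OF R]
    by (simp add: nilpotent_derivation_def shift_def)
qed

(* The series S' with (Id + t^k D) S' = S (Id + t^k E), computed degree by degree
   instead of inverting Id + t^k D. *)
fun conjugate_gauge ::
  "nat \<Rightarrow> ('g \<Rightarrow> 'g::ab_group_add) \<Rightarrow> ('v \<Rightarrow> 'v) \<Rightarrow> (nat \<Rightarrow> 'v \<Rightarrow> 'g) \<Rightarrow> nat \<Rightarrow> 'v \<Rightarrow> 'g" where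
  "conjugate_gauge k D E S n u = S n u +
     (if 0 < k \<and> k \<le> n then S (n - k) (E u) - D (conjugate_gauge k D E S (n - k) u) else 0)"

declare conjugate_gauge.simps [simp del]

lemma gauge_conjugate_gauge:
  assumes "0 < k"
  shows "gauge k D (\<lambda>n. conjugate_gauge k D E S n u) = (\<lambda>n. comp_gauge k E S n u)"
  using assms by (simp add: fun_eq_iff gauge_def comp_gauge_def shift_def conjugate_gauge.simps[of k D E S])

lemma series_apply_conjugate_gauge:
  assumes "0 < k" and "additive D" and "\<And>i. additive (S i)"
  shows "series_apply S (gauge k E w) = gauge k D (series_apply (conjugate_gauge k D E S) w)"
proof -
  have "comp_gauge k E S = (\<lambda>i u. gauge k D (\<lambda>n. conjugate_gauge k D E S n u) i)"
    using fun_cong[OF gauge_conjugate_gauge[OF assms(1), of D E S]] by (simp add: fun_eq_iff)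
  then show ?thesis
    using series_apply_gauge[OF assms(3)] series_apply_gauge_left[OF assms(2)] by simp
qed

lemma linear_conjugate_gauge:
  assumes D: "Vector_Spaces.linear s2 s2 D" and E: "Vector_Spaces.linear s1 s1 E"
    and S: "\<And>i. Vector_Spaces.linear s1 s2 (S i)"
  shows "Vector_Spaces.linear s1 s2 (conjugate_gauge k D E S n)"
proof (induction n rule: less_induct)
  case (less n)
  show ?case
  proof (cases "0 < k \<and> k \<le> n")
    case True
    then have "Vector_Spaces.linear s1 s2
        (\<lambda>u. S n u + (S (n - k) (E u) - D (conjugate_gauge k D E S (n - k) u)))"
      using less by (intro linear_add_fun linear_diff_fun linear_comp_fun[OF E] linear_comp_fun[OF _ D] S) auto
    moreover have "conjugate_gauge k D E S n
        = (\<lambda>u. S n u + (S (n - k) (E u) - D (conjugate_gauge k D E S (n - k) u)))"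
      using True by (simp add: fun_eq_iff conjugate_gauge.simps[of k D E S n])
    ultimately show ?thesis by simp
  next
    case False
    then have "conjugate_gauge k D E S n = S n"
      by (auto simp: fun_eq_iff conjugate_gauge.simps[of k D E S n])
    then show ?thesis using S by simp
  qed
qed

definition unit_series :: "nat \<Rightarrow> 'a \<Rightarrow> 'a::zero" where
  "unit_series i = (if i = 0 then id else (\<lambda>x. 0))"

lemma linear_unit_series:
  assumes "vector_space s"
  shows "Vector_Spaces.linear s s (unit_series i)"
proof (cases "i = 0")
  case True
  then show ?thesis using vector_space.linear_id[OF assms] by (simp add: unit_series_def)
next
  case False
  then show ?thesis
    using assms module.scale_zero_right[of s] by (simp add: unit_series_def linear_iff module_iff_vector_space)
qed

section \<open>Gauging away a formal deformation\<close>

locale leibniz_rota_baxter =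
  fixes sg :: "'k::field \<Rightarrow> 'g::ab_group_add \<Rightarrow> 'g"
    and br :: "'g \<Rightarrow> 'g \<Rightarrow> 'g"
    and sv :: "'k \<Rightarrow> 'v::ab_group_add \<Rightarrow> 'v"
    and rL rR :: "'g \<Rightarrow> 'v \<Rightarrow> 'v"
    and T :: "'v \<Rightarrow> 'g"
  assumes leibniz_algebra: "leibniz_algebra sg br"
    and representation: "leibniz_rep sg br sv rL rR"
    and rota_baxter: "rel_RB sg br sv rL rR T"
begin

abbreviation deformation :: "(nat \<Rightarrow> 'v \<Rightarrow> 'g) \<Rightarrow> bool" where
  "deformation S \<equiv> formal_deformation sg br sv rL rR T S"

lemma vector_space_g: "vector_space sg"
  and vector_space_v: "vector_space sv"
  using leibniz_algebra representation by (simp_all add: leibniz_algebra_def leibniz_rep_def)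

lemma linear_br: "Vector_Spaces.linear sg sg (br x)"
  and linear_rL: "Vector_Spaces.linear sv sv (rL x)"
  and linear_T: "Vector_Spaces.linear sv sg T"
  using leibniz_algebra representation rota_baxter
  by (simp_all add: leibniz_algebra_def leibniz_rep_def rel_RB_def)

lemma leibniz_identity: "br x (br y z) = br (br x y) z + br y (br x z)"
  and rL_br: "rL (br x y) v = rL x (rL y v) - rL y (rL x v)"
  and rR_br: "rR (br x y) v = rL x (rR y v) - rR y (rL x v)"
  using leibniz_algebra representation
  unfolding leibniz_algebra_def leibniz_rep_def by blast+

lemma biadditive_br: "biadditive br"
  using leibniz_algebra unfolding biadditive_def leibniz_algebra_def by (blast intro: additive_linear)

lemma biadditive_rL: "biadditive rL"
  and biadditive_rR: "biadditive rR"
  using representation unfolding biadditive_def leibniz_rep_def by (blast intro: additive_linear)+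

lemmas additive_T = additive_linear[OF linear_T]

lemmas bilinear_simps = biadditive_simps[OF biadditive_br] biadditive_simps[OF biadditive_rL]
  biadditive_simps[OF biadditive_rR] additive.add[OF additive_T] additive.zero[OF additive_T]
  additive.diff[OF additive_T] additive.minus[OF additive_T]

lemma nilpotent_derivation_br: "y \<in> Nij br rL rR T \<Longrightarrow> nilpotent_derivation br (br y) (br y) (br y)"
  unfolding nilpotent_derivation_def Nij_def by (simp add: leibniz_identity[of y])

lemma nilpotent_derivation_rL: "y \<in> Nij br rL rR T \<Longrightarrow> nilpotent_derivation rL (br y) (rL y) (rL y)"
  unfolding nilpotent_derivation_def Nij_def by (simp add: rL_br[of y])

lemma nilpotent_derivation_rR: "y \<in> Nij br rL rR T \<Longrightarrow> nilpotent_derivation rR (br y) (rL y) (rL y)"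
  unfolding nilpotent_derivation_def Nij_def by (simp add: rR_br[of y])

definition rb_arg :: "(nat \<Rightarrow> 'v \<Rightarrow> 'g) \<Rightarrow> 'v \<Rightarrow> 'v \<Rightarrow> nat \<Rightarrow> 'v" where
  "rb_arg S u v m = rL (S m u) v + rR (S m v) u"

lemma deformation_iff:
  "deformation S \<longleftrightarrow> (\<forall>i. Vector_Spaces.linear sv sg (S i)) \<and> S 0 = T \<and>
     (\<forall>u v. cauchy br (\<lambda>i. S i u) (\<lambda>i. S i v) = series_apply S (rb_arg S u v))"
  unfolding formal_deformation_def cauchy_def rb_arg_def fun_eq_iff by blast

lemma leading_coefficient_cocycle:
  assumes S: "deformation S" and k: "0 < k" and gap: "\<And>j u. 0 < j \<Longrightarrow> j < k \<Longrightarrow> S j u = 0"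
  shows "(\<lambda>u. - S k u) \<in> Z1 sg br sv rL rR T"
proof -
  have lin: "Vector_Spaces.linear sv sg (S i)" for i
    using S by (simp add: deformation_iff)
  have S0: "S 0 = T" and eq: "cauchy br (\<lambda>i. S i u) (\<lambda>i. S i v) k = series_apply S (rb_arg S u v) k" for u v
    using S by (simp_all add: deformation_iff)
  have "br (T u) (S k v) + br (S k u) (T v)
      = T (rL (S k u) v + rR (S k v) u) + S k (rL (T u) v + rR (T v) u)" for u v
    using eq[of u v] k gap
    by (simp add: cauchy_two_terms bilinear_simps S0 rb_arg_def)
  then have "dT1 br rL rR T (\<lambda>u. - S k u) u v = 0" for u v
    using additive.minus[OF additive_linear[OF lin]]
    by (simp add: dT1_def bilinear_simps algebra_simps)
  moreover have "Vector_Spaces.linear sv sg (\<lambda>u. - S k u)"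
    by (rule linear_minus_fun[OF lin])
  ultimately show ?thesis by (simp add: Z1_def)
qed

lemma cauchy_comp_gauge_deformation:
  assumes "deformation S"
  shows "cauchy br (\<lambda>n. comp_gauge k E S n u) (\<lambda>n. comp_gauge k E S n v) =
    series_apply S (\<lambda>m. rb_arg S u v m +
      shift k (\<lambda>j. rb_arg S (E u) v j + rb_arg S u (E v) j + shift k (rb_arg S (E u) (E v)) j) m)"
proof -
  have add: "additive (S i)" for i
    using assms by (simp add: deformation_iff) (blast intro: additive_linear)
  have eq: "cauchy br (\<lambda>i. S i p) (\<lambda>i. S i q) = series_apply S (rb_arg S p q)" for p q
    using assms by (simp add: deformation_iff)
  show ?thesis
    unfolding comp_gauge_def
    by (simp add: fun_eq_iff cauchy_expand[OF biadditive_br] eq series_apply_add_shift series_apply_add add)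
qed

lemma rb_arg_gauge:
  assumes y: "y \<in> Nij br rL rR T"
    and a: "gauge k (br y) a = (\<lambda>n. comp_gauge k (rL y) S n u)"
    and b: "gauge k (br y) b = (\<lambda>n. comp_gauge k (rL y) S n v)"
  shows "rb_arg S u v m +
      shift k (\<lambda>j. rb_arg S (rL y u) v j + rb_arg S u (rL y v) j + shift k (rb_arg S (rL y u) (rL y v)) j) m
    = gauge k (rL y) (\<lambda>j. rL (a j) v + rR (b j) u) m"
proof -
  have "gauge k (rL y) (\<lambda>j. rL (a j) v + rR (b j) u) m
      = gauge k (rL y) (\<lambda>j. rL (a j) v) m + gauge k (rL y) (\<lambda>j. rR (b j) u) m"
    by (simp add: gauge_def shift_def bilinear_simps)
  also have "\<dots> = (rL (gauge k (br y) a m) v + shift k (\<lambda>j. rL (gauge k (br y) a j) (rL y v)) m)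
      + (rR (gauge k (br y) b m) u + shift k (\<lambda>j. rR (gauge k (br y) b j) (rL y u)) m)"
    using gauge_const_right[OF biadditive_rL nilpotent_derivation_rL[OF y]]
      gauge_const_right[OF biadditive_rR nilpotent_derivation_rR[OF y]] by simp
  also have "\<dots> = rb_arg S u v m +
      shift k (\<lambda>j. rb_arg S (rL y u) v j + rb_arg S u (rL y v) j + shift k (rb_arg S (rL y u) (rL y v)) j) m"
    unfolding a b comp_gauge_def rb_arg_def
    by (cases "k \<le> m"; cases "k \<le> m - k") (simp_all add: shift_def bilinear_simps add_ac)
  finally show ?thesis ..
qed

lemma deformation_conjugate_gauge:
  assumes S: "deformation S" and k: "0 < k" and y: "y \<in> Nij br rL rR T"
  shows "deformation (conjugate_gauge k (br y) (rL y) S)"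
proof -
  define S' where "S' = conjugate_gauge k (br y) (rL y) S"
  have lin: "Vector_Spaces.linear sv sg (S i)" for i
    using S by (simp add: deformation_iff)
  have lin': "Vector_Spaces.linear sv sg (S' i)" for i
    unfolding S'_def by (rule linear_conjugate_gauge[OF linear_br linear_rL lin])
  have S'0: "S' 0 = T"
    using S k by (simp add: S'_def deformation_iff fun_eq_iff conjugate_gauge.simps)
  have gauge_S': "gauge k (br y) (\<lambda>n. S' n u) = (\<lambda>n. comp_gauge k (rL y) S n u)" for u
    unfolding S'_def by (rule gauge_conjugate_gauge[OF k])
  have "cauchy br (\<lambda>i. S' i u) (\<lambda>i. S' i v) = series_apply S' (rb_arg S' u v)" for u v
  proof (rule injD[OF inj_gauge[OF k, of "br y"]])
    have "gauge k (br y) (cauchy br (\<lambda>i. S' i u) (\<lambda>i. S' i v))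
        = cauchy br (\<lambda>n. comp_gauge k (rL y) S n u) (\<lambda>n. comp_gauge k (rL y) S n v)"
      using cauchy_gauge[OF biadditive_br additive_linear[OF linear_br] nilpotent_derivation_br[OF y],
          of k "\<lambda>i. S' i u" "\<lambda>i. S' i v"]
      by (simp add: gauge_S')
    also have "\<dots> = series_apply S (gauge k (rL y) (rb_arg S' u v))"
      unfolding cauchy_comp_gauge_deformation[OF S] rb_arg_gauge[OF y gauge_S' gauge_S']
      by (simp add: rb_arg_def[abs_def])
    also have "\<dots> = gauge k (br y) (series_apply S' (rb_arg S' u v))"
      unfolding S'_def
      by (rule series_apply_conjugate_gauge[OF k additive_linear[OF linear_br] additive_linear[OF lin]])
    finally show "gauge k (br y) (cauchy br (\<lambda>i. S' i u) (\<lambda>i. S' i v))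
        = gauge k (br y) (series_apply S' (rb_arg S' u v))" .
  qed
  with lin' S'0 show ?thesis
    by (simp add: deformation_iff S'_def)
qed

lemma conjugate_gauge_vanishes:
  assumes S0: "S 0 = T" and k: "0 < k" and gap: "\<And>j u. 0 < j \<Longrightarrow> j < k \<Longrightarrow> S j u = 0"
    and y: "dT0 br rL T y = (\<lambda>u. - S k u)" and j: "0 < j" "j \<le> k"
  shows "conjugate_gauge k (br y) (rL y) S j u = 0"
proof (cases "j = k")
  case True
  have "conjugate_gauge k (br y) (rL y) S 0 u = T u"
    using S0 k by (simp add: conjugate_gauge.simps)
  then show ?thesis
    using True k fun_cong[OF y, of u] S0
    by (simp add: conjugate_gauge.simps[of k _ _ _ k] dT0_def algebra_simps)
next
  case False
  then show ?thesis using j gap by (simp add: conjugate_gauge.simps)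
qed

(* The conditions of trivial_deformation, with the constant deformation T replaced by S. *)
definition gauge_equivalent ::
  "(nat \<Rightarrow> 'v \<Rightarrow> 'g) \<Rightarrow> (nat \<Rightarrow> 'v \<Rightarrow> 'g) \<Rightarrow> (nat \<Rightarrow> 'g \<Rightarrow> 'g) \<Rightarrow> (nat \<Rightarrow> 'v \<Rightarrow> 'v) \<Rightarrow>
    bool" where
  "gauge_equivalent Ts S P Q \<longleftrightarrow>
     (\<forall>i. Vector_Spaces.linear sg sg (P i)) \<and> (\<forall>i. Vector_Spaces.linear sv sv (Q i))
   \<and> P 0 = id \<and> Q 0 = id
   \<and> (\<forall>n a b. cauchy br (\<lambda>i. P i a) (\<lambda>i. P i b) n = P n (br a b))
   \<and> (\<forall>n z u. cauchy rL (\<lambda>i. P i z) (\<lambda>i. Q i u) n = Q n (rL z u))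
   \<and> (\<forall>n z u. cauchy rR (\<lambda>i. P i z) (\<lambda>i. Q i u) n = Q n (rR z u))
   \<and> (\<forall>u. series_apply Ts (\<lambda>i. Q i u) = series_apply P (\<lambda>i. S i u))"

lemma gauge_equivalent_refl:
  assumes "deformation Ts"
  shows "gauge_equivalent Ts Ts unit_series unit_series"
proof -
  have "Vector_Spaces.linear sv sg (Ts i)" for i
    using assms by (simp add: deformation_iff)
  then have "Ts i 0 = 0" for i
    by (rule additive.zero[OF additive_linear])
  then have "series_apply Ts (\<lambda>i. unit_series i u) n = series_apply unit_series (\<lambda>i. Ts i u) n" for u n
    by (simp add: cauchy_single_left cauchy_single_right unit_series_def)
  moreover have "Vector_Spaces.linear sg sg (unit_series i)" "Vector_Spaces.linear sv sv (unit_series i)" for i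
    by (simp_all add: linear_unit_series vector_space_g vector_space_v)
  ultimately show ?thesis
    unfolding gauge_equivalent_def
    by (simp add: fun_eq_iff cauchy_single_left unit_series_def bilinear_simps)
qed

lemma gauge_equivalent_comp_gauge:
  assumes eqv: "gauge_equivalent Ts S P Q" and Ts: "\<And>i. Vector_Spaces.linear sv sg (Ts i)"
    and k: "0 < k" and y: "y \<in> Nij br rL rR T"
  shows "gauge_equivalent Ts (conjugate_gauge k (br y) (rL y) S)
    (comp_gauge k (br y) P) (comp_gauge k (rL y) Q)"
proof -
  define S' where "S' = conjugate_gauge k (br y) (rL y) S"
  have linP: "Vector_Spaces.linear sg sg (P i)" and linQ: "Vector_Spaces.linear sv sv (Q i)" for i
    using eqv by (simp_all add: gauge_equivalent_def)
  note addP = additive_linear[OF linP] and addQ = additive_linear[OF linQ]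
  have intertwine: "series_apply Ts (\<lambda>i. Q i u) = series_apply P (\<lambda>i. S i u)" for u
    using eqv by (simp add: gauge_equivalent_def)
  have "series_apply Ts (\<lambda>i. comp_gauge k (rL y) Q i u)
      = (\<lambda>n. series_apply Ts (\<lambda>i. Q i u) n + shift k (series_apply Ts (\<lambda>i. Q i (rL y u))) n)" for u
    unfolding comp_gauge_def by (rule series_apply_add_shift[OF additive_linear[OF Ts]])
  also have "\<dots> u = series_apply P (\<lambda>i. comp_gauge k (rL y) S i u)" for u
    unfolding comp_gauge_def intertwine by (rule series_apply_add_shift[OF addP, symmetric])
  also have "\<dots> u = series_apply (comp_gauge k (br y) P) (\<lambda>i. S' i u)" for u
    unfolding S'_def gauge_conjugate_gauge[OF k, of "br y" "rL y" S u, symmetric]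
    by (rule series_apply_gauge[OF addP])
  finally have "series_apply Ts (\<lambda>i. comp_gauge k (rL y) Q i u)
      = series_apply (comp_gauge k (br y) P) (\<lambda>i. S' i u)" for u .
  moreover have "cauchy br (\<lambda>i. comp_gauge k (br y) P i a) (\<lambda>i. comp_gauge k (br y) P i b) n
      = comp_gauge k (br y) P n (br a b)" for n a b
    using eqv by (intro cauchy_comp_gauge[OF biadditive_br addP _ nilpotent_derivation_br[OF y]])
      (simp add: gauge_equivalent_def)
  moreover have "cauchy rL (\<lambda>i. comp_gauge k (br y) P i z) (\<lambda>i. comp_gauge k (rL y) Q i u) n
      = comp_gauge k (rL y) Q n (rL z u)" for n z u
    using eqv by (intro cauchy_comp_gauge[OF biadditive_rL addQ _ nilpotent_derivation_rL[OF y]])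
      (simp add: gauge_equivalent_def)
  moreover have "cauchy rR (\<lambda>i. comp_gauge k (br y) P i z) (\<lambda>i. comp_gauge k (rL y) Q i u) n
      = comp_gauge k (rL y) Q n (rR z u)" for n z u
    using eqv by (intro cauchy_comp_gauge[OF biadditive_rR addQ _ nilpotent_derivation_rR[OF y]])
      (simp add: gauge_equivalent_def)
  ultimately show ?thesis
    using eqv k unfolding gauge_equivalent_def S'_def
    by (simp add: linear_comp_gauge linear_br linear_rL linP linQ comp_gauge_below id_def)
qed

definition nijenhuis_primitive :: "nat \<Rightarrow> (nat \<Rightarrow> 'v \<Rightarrow> 'g) \<Rightarrow> 'g" where
  "nijenhuis_primitive k S = (SOME y. y \<in> Nij br rL rR T \<and> dT0 br rL T y = (\<lambda>u. - S k u))"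

primrec gauge_stage ::
  "(nat \<Rightarrow> 'v \<Rightarrow> 'g) \<Rightarrow> nat \<Rightarrow>
    (nat \<Rightarrow> 'v \<Rightarrow> 'g) \<times> (nat \<Rightarrow> 'g \<Rightarrow> 'g) \<times> (nat \<Rightarrow> 'v \<Rightarrow> 'v)" where
  "gauge_stage Ts 0 = (Ts, unit_series, unit_series)"
| "gauge_stage Ts (Suc m) = (case gauge_stage Ts m of (S, P, Q) \<Rightarrow>
     let y = nijenhuis_primitive (Suc m) S in
     (conjugate_gauge (Suc m) (br y) (rL y) S,
      comp_gauge (Suc m) (br y) P, comp_gauge (Suc m) (rL y) Q))"

lemma gauge_stage_invariant:
  assumes exact: "Z1 sg br sv rL rR T = dT0 br rL T ` Nij br rL rR T" and Ts: "deformation Ts"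
  shows "case gauge_stage Ts m of (S, P, Q) \<Rightarrow>
    deformation S \<and> (\<forall>j u. 0 < j \<and> j \<le> m \<longrightarrow> S j u = 0) \<and> gauge_equivalent Ts S P Q"
proof (induction m)
  case 0
  show ?case using Ts by (simp add: gauge_equivalent_refl)
next
  case (Suc m)
  obtain S P Q where stage: "gauge_stage Ts m = (S, P, Q)"
    by (cases "gauge_stage Ts m")
  with Suc.IH have S: "deformation S" and gap: "\<And>j u. 0 < j \<Longrightarrow> j \<le> m \<Longrightarrow> S j u = 0"
    and eqv: "gauge_equivalent Ts S P Q"
    by auto
  define y where "y = nijenhuis_primitive (Suc m) S"
  have "\<exists>y. y \<in> Nij br rL rR T \<and> dT0 br rL T y = (\<lambda>u. - S (Suc m) u)"
    using leading_coefficient_cocycle[OF S, of "Suc m"] gap exact by (force simp: less_Suc_eq_le)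
  then have y: "y \<in> Nij br rL rR T" and dy: "dT0 br rL T y = (\<lambda>u. - S (Suc m) u)"
    unfolding y_def nijenhuis_primitive_def by (metis (mono_tags, lifting) someI_ex)+
  have "deformation (conjugate_gauge (Suc m) (br y) (rL y) S)"
    using deformation_conjugate_gauge[OF S _ y] by simp
  moreover have "conjugate_gauge (Suc m) (br y) (rL y) S j u = 0" if "0 < j" "j \<le> Suc m" for j u
    using S gap dy that by (intro conjugate_gauge_vanishes[of S "Suc m" y]) (auto simp: deformation_iff)
  moreover have "gauge_equivalent Ts (conjugate_gauge (Suc m) (br y) (rL y) S)
      (comp_gauge (Suc m) (br y) P) (comp_gauge (Suc m) (rL y) Q)"
    using gauge_equivalent_comp_gauge[OF eqv _ _ y] Ts by (simp add: deformation_iff)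
  ultimately show ?case
    using stage by (simp add: y_def Let_def)
qed

lemma gauge_stage_stable:
  assumes "gauge_stage Ts m = (S, P, Q)" and "gauge_stage Ts n = (S', P', Q')" and "n \<le> m"
  shows "P n = P' n \<and> Q n = Q' n"
  using assms
proof (induction m arbitrary: S P Q)
  case 0
  then show ?case by simp
next
  case (Suc m)
  show ?case
  proof (cases "n = Suc m")
    case False
    obtain S0 P0 Q0 where stage: "gauge_stage Ts m = (S0, P0, Q0)"
      by (cases "gauge_stage Ts m")
    with Suc.prems False have "P n = P0 n \<and> Q n = Q0 n"
      by (auto simp: Let_def comp_gauge_below)
    with Suc.IH[OF stage] Suc.prems False show ?thesis by simp
  qed (use Suc.prems in simp)
qed

lemma trivial_deformationI:
  assumes stages: "\<And>n. \<exists>S P Q. gauge_equivalent Ts S P Q \<and> S 0 = T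
      \<and> (\<forall>j u. 0 < j \<and> j \<le> n \<longrightarrow> S j u = 0) \<and> (\<forall>i\<le>n. P i = ph i \<and> Q i = vph i)"
    and "ph 1 = br x" and "vph 1 = rL x"
  shows "trivial_deformation sg br sv rL rR T Ts"
proof -
  have degree_n: "Vector_Spaces.linear sg sg (ph n) \<and> Vector_Spaces.linear sv sv (vph n)
    \<and> (\<Sum>i\<le>n. br (ph i a) (ph (n - i) b)) = ph n (br a b)
    \<and> vph n (rL a u) = (\<Sum>i\<le>n. rL (ph i a) (vph (n - i) u))
    \<and> vph n (rR a u) = (\<Sum>i\<le>n. rR (ph i a) (vph (n - i) u))
    \<and> (\<Sum>i\<le>n. Ts i (vph (n - i) u)) = ph n (T u)" for n a b u
  proof -
    obtain S P Q where eqv: "gauge_equivalent Ts S P Q" and S0: "S 0 = T"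
      and gap: "\<forall>j u. 0 < j \<and> j \<le> n \<longrightarrow> S j u = 0" and PQ: "\<forall>i\<le>n. P i = ph i \<and> Q i = vph i"
      using stages by blast
    have "Vector_Spaces.linear sg sg (P i)" for i
      using eqv by (simp add: gauge_equivalent_def)
    then have "P i 0 = 0" for i
      by (rule additive.zero[OF additive_linear])
    then have "series_apply P (\<lambda>i. S i u) n = P n (T u)"
      using gap S0 by (simp add: cauchy_single_right)
    then have intertwine: "series_apply Ts (\<lambda>i. Q i u) n = P n (T u)"
      using eqv by (simp add: gauge_equivalent_def)
    moreover have "ph i = P i" "vph i = Q i" if "i \<le> n" for i
      using PQ that by simp_all
    ultimately show ?thesis
      using eqv intertwine unfolding gauge_equivalent_def cauchy_def by simp
  qed
  have "ph 0 = id" "vph 0 = id"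
    using stages[of 0] by (auto simp: gauge_equivalent_def)
  with degree_n assms(2,3) show ?thesis
    unfolding trivial_deformation_def by blast
qed

theorem rigid_if_Z1_eq_dT0_Nij:
  assumes exact: "Z1 sg br sv rL rR T = dT0 br rL T ` Nij br rL rR T"
  shows "rigid sg br sv rL rR T"
  unfolding rigid_def
proof (intro allI impI)
  fix Ts assume Ts: "deformation Ts"
  \<comment> \<open>Stage m changes P and Q only in degrees above m, so the diagonal is their limit.\<close>
  define ph where "ph n = fst (snd (gauge_stage Ts n)) n" for n
  define vph where "vph n = snd (snd (gauge_stage Ts n)) n" for n
  show "trivial_deformation sg br sv rL rR T Ts"
  proof (rule trivial_deformationI)
    fix n
    obtain S P Q where stage: "gauge_stage Ts n = (S, P, Q)"
      by (cases "gauge_stage Ts n")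
    have "P i = ph i \<and> Q i = vph i" if "i \<le> n" for i
    proof -
      obtain S' P' Q' where "gauge_stage Ts i = (S', P', Q')"
        by (cases "gauge_stage Ts i")
      with gauge_stage_stable[OF stage this that] show ?thesis
        by (simp add: ph_def vph_def)
    qed
    with gauge_stage_invariant[OF exact Ts, of n] stage
    show "\<exists>S P Q. gauge_equivalent Ts S P Q \<and> S 0 = T
        \<and> (\<forall>j u. 0 < j \<and> j \<le> n \<longrightarrow> S j u = 0) \<and> (\<forall>i\<le>n. P i = ph i \<and> Q i = vph i)"
      by (auto simp: deformation_iff)
  next
    show "ph 1 = br (nijenhuis_primitive 1 Ts)" "vph 1 = rL (nijenhuis_primitive 1 Ts)"
      by (simp_all add: ph_def vph_def Let_def comp_gauge_def shift_def unit_series_def fun_eq_iff)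
  qed
qed

end

theorem proposition3p20:
  fixes sg :: "'k::field \<Rightarrow> 'g::ab_group_add \<Rightarrow> 'g"
    and br :: "'g \<Rightarrow> 'g \<Rightarrow> 'g"
    and sv :: "'k \<Rightarrow> 'v::ab_group_add \<Rightarrow> 'v"
    and rL rR :: "'g \<Rightarrow> 'v \<Rightarrow> 'v"
    and T :: "'v \<Rightarrow> 'g"
  assumes "leibniz_algebra sg br"
    and "leibniz_rep sg br sv rL rR"
    and "rel_RB sg br sv rL rR T"
    and "Z1 sg br sv rL rR T = dT0 br rL T ` Nij br rL rR T"
  shows "rigid sg br sv rL rR T"
proof -
  interpret leibniz_rota_baxter sg br sv rL rR T
    using assms(1-3) by unfold_locales
  show ?thesis using rigid_if_Z1_eq_dT0_Nij[OF assms(4)] .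
qed

end
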